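(* In the protocol IT-HS described in the context, with $f<\frac{n}{3}$ Byzantine parties, if some nonfaulty party sets $key3=v$ and $key3\_val=val$ in view $v$, then there exist $f+1$ nonfaulty parties whose $suggest$ messages in every view $v'>v$ support the pair $(v,val)$.
   Context: Model. $n$ parties with inputs $x_i$; up to $f$ Byzantine (arbitrary behaviour), the rest nonfaulty; authenticated point-to-point channels; partial synchrony: after an unknown time GST every message arrives within known $\Delta$ time and clocks are synchronized, before GST delays are arbitrary but finite. A party does something "in view $v$" if its variable $view$ equals $v$ at that time. Support: a $suggest$ message whose $key2$, $key2\_val$, $prev\_key2$ fields are $(k2,v2,pk2)$ supports a pair $(K,V)$ if $K\le pk2$, or $K\le k2$ and $V=v2$. Protocol IT-HS (party $i$). Variables: $lock\gets 0$, $lock\_val\gets x_i$; $key3\gets 0$, $key3\_val\gets x_i$; $key2\gets 0$, $key2\_val\gets x_i$, $prev\_key2\gets -1$; $key1\gets 0$, $key1\_val\gets x_i$, $prev\_key1\gets -1$; $view\gets 0$; $highest\_request[j]\gets 0$, $highest\_abort[j]\gets 0$ for $j\in[n]$. "Send-upon-join $m$": for each $j$, send $m$ to $j$ as soon as $highest\_request[j]$ equals the current view. Background: (B1) on $\langle request,v\rangle$ from $j$, $highest\_request[j]\gets\max(highest\_request[j],v)$. (B2) on $\langle done,val\rangle$ from $f+1$ parties with the same $val$: if no $done$ sent yet, send $\langle done,val\rangle$ to all. (B3) on $\langle done,val\rangle$ from $n-f$ parties with the same $val$: decide $val$, terminate. (B4) on $\langle abort,v\rangle$ from $j$ with $highest\_abort[j]<v$: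 $highest\_abort[j]\gets v$; $u\gets$ the $(f+1)$-th largest entry of $highest\_abort$; if $u>highest\_abort[i]$ send $\langle abort,u\rangle$ to all and set $highest\_abort[i]\gets u$; $w\gets$ the $(n-f)$-th largest entry; if $w\ge view$ set $view\gets w+1$. Views: for each value $v$ of $view$, while $view=v$: fresh per-view state; after $11\Delta$ local time send $\langle abort,v\rangle$ to all; ignore other views' messages except $abort$, $done$, $request$; primary $p=(v\bmod n)+1$. View change: send $\langle request,v\rangle$ to all; when $highest\_request[p]=v$ send $\langle suggest,key3,key3\_val,key2,key2\_val,prev\_key2,v\rangle$ to $p$; send-upon-join $\langle proof,key1,key1\_val,prev\_key1,v\rangle$. If $i=p$: upon first $\langle suggest,k3,v3,k2,v2,pk2,v\rangle$ from a party, if $pk2<k2<v$ add $(k2,v2,pk2)$ to $key2\_proofs$; if $k3=0$ add $(k3,v3)$ to $suggestions$; else if $k3<v$ add $(k3,v3)$ as soon as at least $f+1$ triples $(k,w,pk)\in key2\_proofs$ satisfy $k3\le pk$ or ($k3\le k$ and $w=v3$); once $|suggestions|\ge n-f$, send-upon-join $\langle propose,k,w,v\rangle$ for $(k,w)\in suggestions$ with maximal $k$. Message processing: upon first $\langle proof,k1,v1,pk1,v\rangle$ from a party, if $v>k1>pk1$ add $(k1,v1,pk1)$ to $proofs$. Upon first $\langle propose,key,val,v\rangle$ from $p$: if $lock=0$ or $val=lock\_val$, send-upon-join $\langle echo,val,v\rangle$; else if $v>key\ge lock$, then once at least $f+1$ triples $(k,w,pk)\in proofs$ satisfy $lock\le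 pk$ or ($lock\le k$ and $w\ne lock\_val$), send-upon-join $\langle echo,val,v\rangle$. Upon $\langle echo,val,v\rangle$ from $n-f$ parties with the same $val$: send-upon-join $\langle key1,val,v\rangle$; if $key1\_val\ne val$ then $prev\_key1\gets key1$, $key1\_val\gets val$; $key1\gets v$. Upon $\langle key1,val,v\rangle$ from $n-f$ parties (same $val$): send-upon-join $\langle key2,val,v\rangle$; if $key2\_val\ne val$ then $prev\_key2\gets key2$, $key2\_val\gets val$; $key2\gets v$. Upon $\langle key2,val,v\rangle$ from $n-f$ (same $val$): send-upon-join $\langle key3,val,v\rangle$; $key3\gets v$, $key3\_val\gets val$. Upon $\langle key3,val,v\rangle$ from $n-f$ (same $val$): send-upon-join $\langle lock,val,v\rangle$; $lock\gets v$, $lock\_val\gets val$. Upon $\langle lock,val,v\rangle$ from $n-f$ (same $val$): if no $done$ sent yet, send $\langle done,val\rangle$ to all. *)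

theory Defs
  imports Main
begin

text \<open>Parties are 1..n. Views are naturals; key fields
  (key1, key2, key3, lock and their prev_ variants) are integers (prev starts at -1).
  Timing is abstracted away: every step is a nondeterministic interleaving of
  message deliveries, local protocol actions, and Byzantine sends.\<close>

datatype 'v msg =
    MRequest nat | MAbort nat | MDone 'v
  | MSuggest int 'v int 'v int nat   \<comment> \<open>key3, key3_val, key2, key2_val, prev_key2, view\<close>
  | MProof int 'v int nat            \<comment> \<open>key1, key1_val, prev_key1, view\<close>
  | MPropose int 'v nat              \<comment> \<open>key, val, view\<close>
  | MEcho 'v nat | MKey1 'v nat | MKey2 'v nat | MKey3 'v nat | MLock 'v nat

fun msg_view :: "'v msg \<Rightarrow> nat option" where
  "msg_view (MSuggest _ _ _ _ _ w) = Some w"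
| "msg_view (MProof _ _ _ w) = Some w"
| "msg_view (MPropose _ _ w) = Some w"
| "msg_view (MEcho _ w) = Some w"
| "msg_view (MKey1 _ w) = Some w"
| "msg_view (MKey2 _ w) = Some w"
| "msg_view (MKey3 _ w) = Some w"
| "msg_view (MLock _ w) = Some w"
| "msg_view _ = None"

fun is_suggest :: "'v msg \<Rightarrow> bool" where
  "is_suggest (MSuggest _ _ _ _ _ _) = True" | "is_suggest _ = False"
fun is_proof :: "'v msg \<Rightarrow> bool" where
  "is_proof (MProof _ _ _ _) = True" | "is_proof _ = False"
fun is_propose :: "'v msg \<Rightarrow> bool" where
  "is_propose (MPropose _ _ _) = True" | "is_propose _ = False"

definition supports :: "int \<times> 'v \<times> int \<Rightarrow> int \<times> 'v \<Rightarrow> bool" where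
  "supports t P \<longleftrightarrow> (case t of (k2, v2, pk2) \<Rightarrow> case P of (K, V) \<Rightarrow>
      K \<le> pk2 \<or> (K \<le> k2 \<and> V = v2))"

text \<open>Local state of a party. Fields from rcv on are per-view state.\<close>
record 'v lst =
  lock :: int
  lock_val :: 'v
  key3 :: int
  key3_val :: 'v
  key2 :: int
  key2_val :: 'v
  prev_key2 :: int
  key1 :: int
  key1_val :: 'v
  prev_key1 :: int
  view :: nat
  hreq :: "nat \<Rightarrow> nat"
  habort :: "nat \<Rightarrow> nat"
  done_sent :: bool
  decided :: "'v option"
  done_rcv :: "(nat \<times> 'v) set"
  rcv :: "(nat \<times> 'v msg) list"     \<comment> \<open>messages of the current view, in order of receipt (sender, msg)\<close>
  pend :: "'v msg set"               \<comment> \<open>messages registered for send-upon-join\<close>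
  sentp :: "(nat \<times> 'v msg) set"     \<comment> \<open>(destination, msg) already sent from pend\<close>
  sugg_sent :: bool
  abort_sent :: bool
  prop_sent :: bool
  echo_done :: bool
  k1f :: "'v set"
  k2f :: "'v set"
  k3f :: "'v set"
  lkf :: "'v set"

definition primary :: "nat \<Rightarrow> nat \<Rightarrow> nat" where
  "primary n v = (v mod n) + 1"

definition to_all :: "nat \<Rightarrow> 'v msg \<Rightarrow> (nat \<times> 'v msg) set" where
  "to_all n m = (\<lambda>j. (j, m)) ` {1..n}"

text \<open>k-th largest entry (k \<ge> 1) of h over the parties 1..n.\<close>
definition kth_largest :: "nat \<Rightarrow> (nat \<Rightarrow> nat) \<Rightarrow> nat \<Rightarrow> nat" where
  "kth_largest n h k = rev (sort (map h [1..<Suc n])) ! (k - 1)"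

definition init_lst :: "'v \<Rightarrow> 'v lst" where
  "init_lst xi = \<lparr> lock = 0, lock_val = xi, key3 = 0, key3_val = xi,
     key2 = 0, key2_val = xi, prev_key2 = -1, key1 = 0, key1_val = xi, prev_key1 = -1,
     view = 0, hreq = (\<lambda>_. 0), habort = (\<lambda>_. 0), done_sent = False, decided = None,
     done_rcv = {}, rcv = [], pend = {MProof 0 xi (-1) 0}, sentp = {},
     sugg_sent = False, abort_sent = False, prop_sent = False, echo_done = False,
     k1f = {}, k2f = {}, k3f = {}, lkf = {} \<rparr>"

text \<open>Entering view w: fresh per-view state; the proof message is registered for
  send-upon-join (the request message is sent by the caller).\<close>
definition enter_view :: "nat \<Rightarrow> 'v lst \<Rightarrow> 'v lst" where
  "enter_view w s = s\<lparr> view := w, rcv := [],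
     pend := {MProof (key1 s) (key1_val s) (prev_key1 s) w}, sentp := {},
     sugg_sent := False, abort_sent := False, prop_sent := False, echo_done := False,
     k1f := {}, k2f := {}, k3f := {}, lkf := {} \<rparr>"

text \<open>Receipt of message m from j by party i (background handlers B1-B4, and
  buffering of current-view messages; other views' messages are ignored).\<close>
fun on_recv :: "nat \<Rightarrow> nat \<Rightarrow> nat \<Rightarrow> nat \<Rightarrow> 'v msg \<Rightarrow> 'v lst \<Rightarrow> 'v lst \<times> (nat \<times> 'v msg) set" where
  "on_recv n f i j (MRequest w) s = (s\<lparr>hreq := (hreq s)(j := max (hreq s j) w)\<rparr>, {})"
| "on_recv n f i j (MDone val) s =
    (let s1 = s\<lparr>done_rcv := insert (j, val) (done_rcv s)\<rparr>;
         c = card {k. (k, val) \<in> done_rcv s1};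
         r = (if f + 1 \<le> c \<and> \<not> done_sent s1
              then (s1\<lparr>done_sent := True\<rparr>, to_all n (MDone val)) else (s1, {}));
         s3 = (if n - f \<le> c then (fst r)\<lparr>decided := Some val\<rparr> else fst r)
     in (s3, snd r))"
| "on_recv n f i j (MAbort w) s =
    (if habort s j < w then
       (let h1 = (habort s)(j := w);
            u = kth_largest n h1 (f + 1);
            h2 = (if h1 i < u then h1(i := u) else h1);
            out1 = (if h1 i < u then to_all n (MAbort u) else {});
            s1 = s\<lparr>habort := h2\<rparr>;
            w' = kth_largest n h2 (n - f)
        in if view s1 \<le> w'
           then (enter_view (w' + 1) s1, out1 \<union> to_all n (MRequest (w' + 1)))
           else (s1, out1))
     else (s, {}))"
| "on_recv n f i j m s =
    (if msg_view m = Some (view s) then (s\<lparr>rcv := rcv s @ [(j, m)]\<rparr>, {}) else (s, {}))"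

definition first_msg :: "(nat \<times> 'v msg) list \<Rightarrow> nat \<Rightarrow> ('v msg \<Rightarrow> bool) \<Rightarrow> 'v msg option" where
  "first_msg xs j P = (case filter (\<lambda>(k, m). k = j \<and> P m) xs of [] \<Rightarrow> None | (k, m) # _ \<Rightarrow> Some m)"

definition key2_proofs :: "'v lst \<Rightarrow> (nat \<times> (int \<times> 'v \<times> int)) set" where
  "key2_proofs s = {(j, (k2, v2, pk2)) | j k3 v3 k2 v2 pk2 w.
      first_msg (rcv s) j is_suggest = Some (MSuggest k3 v3 k2 v2 pk2 w)
      \<and> pk2 < k2 \<and> k2 < int (view s)}"

definition suggestions :: "nat \<Rightarrow> 'v lst \<Rightarrow> (nat \<times> int \<times> 'v) set" where
  "suggestions f s = {(j, k3, v3) | j k3 v3 k2 v2 pk2 w.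
      first_msg (rcv s) j is_suggest = Some (MSuggest k3 v3 k2 v2 pk2 w)
      \<and> (k3 = 0 \<or> (k3 < int (view s) \<and>
           f + 1 \<le> card {l. \<exists>t. (l, t) \<in> key2_proofs s \<and> supports t (k3, v3)}))}"

definition proofs :: "'v lst \<Rightarrow> (nat \<times> (int \<times> 'v \<times> int)) set" where
  "proofs s = {(j, (k1, v1, pk1)) | j k1 v1 pk1 w.
      first_msg (rcv s) j is_proof = Some (MProof k1 v1 pk1 w)
      \<and> k1 < int (view s) \<and> pk1 < k1}"

datatype 'v act = ATimer | ASuggest | ASend nat "'v msg" | APropose | AEcho
  | AKey1 'v | AKey2 'v | AKey3 'v | ALock 'v | ADone 'v

text \<open>Local protocol actions of party i in its current view: state s, action a,
  new state, set of (destination, message) sent.\<close>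
inductive lact :: "nat \<Rightarrow> nat \<Rightarrow> nat \<Rightarrow> 'v lst \<Rightarrow> 'v act \<Rightarrow> 'v lst \<Rightarrow> (nat \<times> 'v msg) set \<Rightarrow> bool"
  for n f i where
  timer: "\<not> abort_sent s \<Longrightarrow>
    lact n f i s ATimer (s\<lparr>abort_sent := True\<rparr>) (to_all n (MAbort (view s)))"
| suggest: "\<not> sugg_sent s \<Longrightarrow> hreq s (primary n (view s)) = view s \<Longrightarrow>
    lact n f i s ASuggest (s\<lparr>sugg_sent := True\<rparr>)
      {(primary n (view s), MSuggest (key3 s) (key3_val s) (key2 s) (key2_val s) (prev_key2 s) (view s))}"
| sendp: "m \<in> pend s \<Longrightarrow> j \<in> {1..n} \<Longrightarrow> hreq s j = view s \<Longrightarrow> (j, m) \<notin> sentp s \<Longrightarrow>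
    lact n f i s (ASend j m) (s\<lparr>sentp := insert (j, m) (sentp s)\<rparr>) {(j, m)}"
| propose: "i = primary n (view s) \<Longrightarrow> \<not> prop_sent s \<Longrightarrow>
    n - f \<le> card {j. \<exists>k w. (j, k, w) \<in> suggestions f s} \<Longrightarrow>
    (j, k, w) \<in> suggestions f s \<Longrightarrow>
    (\<forall>j' k' w'. (j', k', w') \<in> suggestions f s \<longrightarrow> k' \<le> k) \<Longrightarrow>
    lact n f i s APropose (s\<lparr>prop_sent := True, pend := insert (MPropose k w (view s)) (pend s)\<rparr>) {}"
| echo: "\<not> echo_done s \<Longrightarrow>
    first_msg (rcv s) (primary n (view s)) is_propose = Some (MPropose key val w) \<Longrightarrow>
    (lock s = 0 \<or> val = lock_val s \<or>
      (key < int (view s) \<and> lock s \<le> key \<and>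
       f + 1 \<le> card {j. \<exists>k w' pk. (j, (k, w', pk)) \<in> proofs s \<and>
                          (lock s \<le> pk \<or> (lock s \<le> k \<and> w' \<noteq> lock_val s))})) \<Longrightarrow>
    lact n f i s AEcho (s\<lparr>echo_done := True, pend := insert (MEcho val (view s)) (pend s)\<rparr>) {}"
| key1: "val \<notin> k1f s \<Longrightarrow> n - f \<le> card {j. (j, MEcho val (view s)) \<in> set (rcv s)} \<Longrightarrow>
    lact n f i s (AKey1 val) (s\<lparr>k1f := insert val (k1f s), pend := insert (MKey1 val (view s)) (pend s),
       prev_key1 := (if key1_val s \<noteq> val then key1 s else prev_key1 s),
       key1_val := val, key1 := int (view s)\<rparr>) {}"
| key2: "val \<notin> k2f s \<Longrightarrow> n - f \<le> card {j. (j, MKey1 val (view s)) \<in> set (rcv s)} \<Longrightarrow>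
    lact n f i s (AKey2 val) (s\<lparr>k2f := insert val (k2f s), pend := insert (MKey2 val (view s)) (pend s),
       prev_key2 := (if key2_val s \<noteq> val then key2 s else prev_key2 s),
       key2_val := val, key2 := int (view s)\<rparr>) {}"
| key3: "val \<notin> k3f s \<Longrightarrow> n - f \<le> card {j. (j, MKey2 val (view s)) \<in> set (rcv s)} \<Longrightarrow>
    lact n f i s (AKey3 val) (s\<lparr>k3f := insert val (k3f s), pend := insert (MKey3 val (view s)) (pend s),
       key3 := int (view s), key3_val := val\<rparr>) {}"
| lock: "val \<notin> lkf s \<Longrightarrow> n - f \<le> card {j. (j, MKey3 val (view s)) \<in> set (rcv s)} \<Longrightarrow>
    lact n f i s (ALock val) (s\<lparr>lkf := insert val (lkf s), pend := insert (MLock val (view s)) (pend s),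
       lock := int (view s), lock_val := val\<rparr>) {}"
| donel: "\<not> done_sent s \<Longrightarrow> n - f \<le> card {j. (j, MLock val (view s)) \<in> set (rcv s)} \<Longrightarrow>
    lact n f i s (ADone val) (s\<lparr>done_sent := True\<rparr>) (to_all n (MDone val))"

text \<open>Global state: local states and the set of all messages ever sent
  as (sender, destination, message).\<close>
record 'v gst =
  ls :: "nat \<Rightarrow> 'v lst"
  net :: "(nat \<times> nat \<times> 'v msg) set"

datatype 'v label = LRecv nat nat "'v msg" | LAct nat "'v act" | LByz nat nat "'v msg" | LIdle

definition add_sends :: "nat \<Rightarrow> (nat \<times> 'v msg) set \<Rightarrow> (nat \<times> nat \<times> 'v msg) set" where
  "add_sends i out = {(i, d, m) | d m. (d, m) \<in> out}"

text \<open>F is the set of Byzantine parties; nonfaulty parties that decided have terminated.\<close>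
inductive gstep :: "nat \<Rightarrow> nat \<Rightarrow> nat set \<Rightarrow> 'v gst \<Rightarrow> 'v label \<Rightarrow> 'v gst \<Rightarrow> bool"
  for n f F where
  deliver: "i \<in> {1..n} - F \<Longrightarrow> decided (ls g i) = None \<Longrightarrow> (j, i, m) \<in> net g \<Longrightarrow>
    on_recv n f i j m (ls g i) = (s', out) \<Longrightarrow>
    gstep n f F g (LRecv i j m) \<lparr>ls = (ls g)(i := s'), net = net g \<union> add_sends i out\<rparr>"
| local: "i \<in> {1..n} - F \<Longrightarrow> decided (ls g i) = None \<Longrightarrow> lact n f i (ls g i) a s' out \<Longrightarrow>
    gstep n f F g (LAct i a) \<lparr>ls = (ls g)(i := s'), net = net g \<union> add_sends i out\<rparr>"
| byz: "j \<in> F \<Longrightarrow> k \<in> {1..n} \<Longrightarrow>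
    gstep n f F g (LByz j k m) (g\<lparr>net := insert (j, k, m) (net g)\<rparr>)"
| idle: "gstep n f F g LIdle g"

definition init_gst :: "nat \<Rightarrow> nat set \<Rightarrow> (nat \<Rightarrow> 'v) \<Rightarrow> 'v gst" where
  "init_gst n F x = \<lparr>ls = (\<lambda>i. init_lst (x i)),
     net = {(i, j, MRequest 0) | i j. i \<in> {1..n} - F \<and> j \<in> {1..n}}\<rparr>"

definition is_exec :: "nat \<Rightarrow> nat \<Rightarrow> nat set \<Rightarrow> (nat \<Rightarrow> 'v) \<Rightarrow> (nat \<Rightarrow> 'v gst) \<Rightarrow> (nat \<Rightarrow> 'v label) \<Rightarrow> bool" where
  "is_exec n f F x E L \<longleftrightarrow> E 0 = init_gst n F x \<and> (\<forall>t. gstep n f F (E t) (L t) (E (Suc t)))"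

end

theory Submission
  imports Defs
begin

(* A key3 step in view v needs n - f messages key2(val, v), and since n > 3f at least f + 1 of
   them come from nonfaulty parties. A nonfaulty party's triple (key2, key2_val, prev_key2)
   only moves forward, and each update keeps supporting every pair it supported before
   (supports_key2_update); the update that emits key2(val, v) makes the triple support (v, val).
   A suggest message of a later view carries the triple of that later moment, so it supports
   (v, val) as well. key2_inv makes this an invariant of a party's state and the set of
   messages it has sent; pending key2 messages are covered too, since send-upon-join may
   release them only after further updates in the same view. *)

definition key2_triple :: "'v lst \<Rightarrow> int \<times> 'v \<times> int" where
  "key2_triple s = (key2 s, key2_val s, prev_key2 s)"

lemma supports_key2_update:
  assumes "pk \<le> k" and "k \<le> k'" and "supports (k, v, pk) P"
  shows "supports (k', v', if v \<noteq> v' then k else pk) P"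
  using assms by (auto simp: supports_def split: prod.splits)

definition key2_inv :: "'v lst \<Rightarrow> 'v msg set \<Rightarrow> bool" where
  "key2_inv s M \<longleftrightarrow>
     prev_key2 s \<le> key2 s \<and> key2 s \<le> int (view s) \<and>
     (\<forall>m \<in> pend s. \<not> is_suggest m) \<and>
     (\<forall>val w. MKey2 val w \<in> pend s \<longrightarrow> w = view s \<and> supports (key2_triple s) (int w, val)) \<and>
     (\<forall>val w. MKey2 val w \<in> M \<longrightarrow> supports (key2_triple s) (int w, val)) \<and>
     (\<forall>k3 v3 k2 v2 pk2 w. MSuggest k3 v3 k2 v2 pk2 w \<in> M \<longrightarrow> w \<le> view s) \<and>
     (\<forall>k3 v3 k2 v2 pk2 w' val w. MSuggest k3 v3 k2 v2 pk2 w' \<in> M \<longrightarrow> MKey2 val w \<in> M \<longrightarrow>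
        w < w' \<longrightarrow> supports (k2, v2, pk2) (int w, val))"

lemma key2_inv_suggest_supports:
  "key2_inv s M \<Longrightarrow> MSuggest k3 v3 k2 v2 pk2 w' \<in> M \<Longrightarrow> MKey2 val w \<in> M \<Longrightarrow> w < w' \<Longrightarrow>
    supports (k2, v2, pk2) (int w, val)"
  by (simp add: key2_inv_def)

lemma key2_inv_update:
  assumes inv: "key2_inv s M"
    and "prev_key2 s' \<le> key2 s'" and "key2 s' \<le> int (view s')"
    and view_mono: "view s \<le> view s'"
    and "\<And>P. supports (key2_triple s) P \<Longrightarrow> supports (key2_triple s') P"
    and "\<forall>m \<in> pend s'. \<not> is_suggest m"
    and "\<forall>val w. MKey2 val w \<in> pend s' \<longrightarrow> w = view s' \<and> supports (key2_triple s') (int w, val)"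
    and key2_out: "\<And>val w. MKey2 val w \<in> Out \<Longrightarrow> MKey2 val w \<in> pend s"
    and suggest_out: "\<And>k3 v3 k2 v2 pk2 w. MSuggest k3 v3 k2 v2 pk2 w \<in> Out \<Longrightarrow>
       w = view s \<and> (k2, v2, pk2) = key2_triple s"
  shows "key2_inv s' (M \<union> Out)"
proof -
  have key2_old: "supports (key2_triple s) (int w, val)" if "MKey2 val w \<in> M \<union> Out" for val w
    using that inv key2_out by (auto simp: key2_inv_def)
  have suggest_old: "w \<le> view s" if "MSuggest k3 v3 k2 v2 pk2 w \<in> M \<union> Out" for k3 v3 k2 v2 pk2 w
    using that inv suggest_out by (fastforce simp: key2_inv_def)
  have cross: "supports (k2, v2, pk2) (int w, val)"
    if sugg: "MSuggest k3 v3 k2 v2 pk2 w' \<in> M \<union> Out" and key2: "MKey2 val w \<in> M \<union> Out"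
      and "w < w'" for k3 v3 k2 v2 pk2 w' val w
  proof -
    have "MKey2 val w \<in> M"
      using key2 key2_out inv suggest_old[OF sugg] \<open>w < w'\<close> by (fastforce simp: key2_inv_def)
    show ?thesis
    proof (cases "MSuggest k3 v3 k2 v2 pk2 w' \<in> M")
      case True
      with \<open>MKey2 val w \<in> M\<close> \<open>w < w'\<close> inv show ?thesis by (auto simp: key2_inv_def)
    next
      case False
      then have "(k2, v2, pk2) = key2_triple s" using sugg suggest_out by blast
      with key2_old[OF key2] show ?thesis by simp
    qed
  qed
  show ?thesis
    using assms key2_old suggest_old cross unfolding key2_inv_def
    by (meson order_trans)
qed

lemma on_recv_facts:
  assumes "on_recv n f i j m s = (s', out)"
  shows "key2_triple s' = key2_triple s" and "view s \<le> view s'"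
    and "pend s' = pend s \<and> view s' = view s \<or> (\<exists>k v pk w. pend s' = {MProof k v pk w})"
    and "set (rcv s') \<subseteq> insert (j, m) (set (rcv s))"
    and "snd ` out \<subseteq> range MRequest \<union> range MAbort \<union> range MDone"
  using assms
  by (cases m; fastforce simp: key2_triple_def Let_def enter_view_def to_all_def split: if_splits)+

lemma key2_inv_on_recv:
  assumes "key2_inv s M" and "on_recv n f i j m s = (s', out)"
  shows "key2_inv s' (M \<union> snd ` out)"
proof -
  note facts = on_recv_facts[OF assms(2)]
  show ?thesis
  proof (rule key2_inv_update[OF assms(1)])
    show "prev_key2 s' \<le> key2 s'" "key2 s' \<le> int (view s')"
      using assms(1) facts(1,2) by (auto simp: key2_inv_def key2_triple_def)
    show "\<forall>m \<in> pend s'. \<not> is_suggest m"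
      "\<forall>val w. MKey2 val w \<in> pend s' \<longrightarrow> w = view s' \<and> supports (key2_triple s') (int w, val)"
      using assms(1) facts(1,3) by (auto simp: key2_inv_def)
  qed (use facts(1,2,5) in auto)
qed

lemma key2_inv_lact:
  assumes "key2_inv s M" and "lact n f i s a s' out"
  shows "key2_inv s' (M \<union> snd ` out)"
  using assms(2)
proof cases
  case (key2 val)
  have kept: "supports (key2_triple s') P" if "supports (key2_triple s) P" for P
    using supports_key2_update[of "prev_key2 s" "key2 s" "int (view s)" "key2_val s" P val]
      that assms(1) key2
    by (simp add: key2_inv_def key2_triple_def)
  have "supports (key2_triple s') (int (view s), val)"
    using key2 by (simp add: key2_triple_def supports_def)
  with kept assms(1) key2 show ?thesis
    by (intro key2_inv_update) (auto simp: key2_inv_def)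
next
  case (sendp m j)
  with assms(1) show ?thesis
    by (intro key2_inv_update) (auto simp: key2_inv_def key2_triple_def)
qed (use assms(1) in \<open>intro key2_inv_update; auto simp: key2_inv_def key2_triple_def to_all_def\<close>)+

definition sent :: "'v gst \<Rightarrow> nat \<Rightarrow> 'v msg set" where
  "sent g j = {m. \<exists>d. (j, d, m) \<in> net g}"

lemma sent_add_sends:
  "sent \<lparr>ls = l, net = net g \<union> add_sends i out\<rparr> j = (if j = i then sent g j \<union> snd ` out else sent g j)"
  unfolding sent_def add_sends_def by force

lemma key2_inv_gstep:
  assumes "gstep n f F g l g'" and "j \<notin> F" and "key2_inv (ls g j) (sent g j)"
  shows "key2_inv (ls g' j) (sent g' j)"
  using assms(1)
proof cases
  case (deliver i k m s' out)
  then show ?thesis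
    using assms(3) key2_inv_on_recv[of "ls g i" "sent g i" n f i k m s' out]
    by (auto simp: sent_add_sends)
next
  case (local i a s' out)
  then show ?thesis
    using assms(3) key2_inv_lact[of "ls g i" "sent g i" n f i a s' out]
    by (auto simp: sent_add_sends)
next
  case (byz k d m)
  then have "sent g' j = sent g j" using assms(2) by (auto simp: sent_def)
  then show ?thesis using assms(3) byz by simp
qed (use assms(3) in simp)

lemma lact_rcv: "lact n f i s a s' out \<Longrightarrow> rcv s' = rcv s"
  by (cases rule: lact.cases) auto

lemma gstep_net_mono: "gstep n f F g l g' \<Longrightarrow> net g \<subseteq> net g'"
  by (cases rule: gstep.cases) auto

lemma exec_invariant:
  assumes "is_exec n f F x E L" and "P (init_gst n F x)"
    and "\<And>g l g'. P g \<Longrightarrow> gstep n f F g l g' \<Longrightarrow> P g'"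
  shows "P (E t)"
  by (induction t) (use assms in \<open>auto simp: is_exec_def\<close>)

lemma exec_net_mono:
  assumes "is_exec n f F x E L" and "t \<le> t'"
  shows "net (E t) \<subseteq> net (E t')"
  using lift_Suc_mono_le[of "\<lambda>t. net (E t)"] gstep_net_mono assms
  by (metis is_exec_def)

lemma exec_sender_range:
  assumes "is_exec n f F x E L" and "F \<subseteq> {1..n}" and "(a, b, m) \<in> net (E t)"
  shows "a \<in> {1..n}"
proof -
  have "\<forall>(a, b, m) \<in> net (E t). a \<in> {1..n}"
  proof (rule exec_invariant[OF assms(1)])
    fix g l g' assume inv: "\<forall>(a, b, m) \<in> net g. a \<in> {1..n}" and step: "gstep n f F g l g'"
    from step show "\<forall>(a, b, m) \<in> net g'. a \<in> {1..n}"
      using assms(2) by (cases rule: gstep.cases) (use inv in \<open>auto simp: add_sends_def\<close>)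
  qed (auto simp: init_gst_def)
  then show ?thesis using assms(3) by blast
qed

lemma exec_received_sent:
  assumes "is_exec n f F x E L" and "(k, m) \<in> set (rcv (ls (E t) j))"
  shows "(k, j, m) \<in> net (E t)"
proof -
  have "\<forall>(k, m) \<in> set (rcv (ls (E t) j)). (k, j, m) \<in> net (E t)"
  proof (rule exec_invariant[OF assms(1), where P = "\<lambda>g. \<forall>(k, m) \<in> set (rcv (ls g j)). (k, j, m) \<in> net g"])
    fix g l g' assume inv: "\<forall>(k, m) \<in> set (rcv (ls g j)). (k, j, m) \<in> net g"
      and step: "gstep n f F g l g'"
    from step show "\<forall>(k, m) \<in> set (rcv (ls g' j)). (k, j, m) \<in> net g'"
    proof cases
      case (deliver i k m s' out)
      then show ?thesis using inv on_recv_facts(4)[OF \<open>on_recv n f i k m (ls g i) = (s', out)\<close>] by auto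
    next
      case (local i a s' out)
      then show ?thesis using inv lact_rcv[OF \<open>lact n f i (ls g i) a s' out\<close>] by auto
    qed (use inv in auto)
  qed (simp add: init_gst_def init_lst_def)
  then show ?thesis using assms(2) by blast
qed

lemma exec_key2_inv:
  assumes "is_exec n f F x E L" and "j \<notin> F"
  shows "key2_inv (ls (E t) j) (sent (E t) j)"
proof (rule exec_invariant[OF assms(1)])
  show "key2_inv (ls (init_gst n F x) j) (sent (init_gst n F x) j)"
    by (auto simp: key2_inv_def init_gst_def init_lst_def sent_def)
qed (rule key2_inv_gstep[OF _ assms(2)])

lemma exec_suggest_supports_earlier_key2:
  assumes "is_exec n f F x E L" and "j \<notin> F"
    and "MKey2 val w \<in> sent (E t) j" and "MSuggest k3 v3 k2 v2 pk2 w' \<in> sent (E t') j"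
    and "w < w'"
  shows "supports (k2, v2, pk2) (int w, val)"
proof -
  have "net (E t) \<subseteq> net (E (max t t'))" and "net (E t') \<subseteq> net (E (max t t'))"
    using exec_net_mono[OF assms(1)] by simp_all
  then have "sent (E t) j \<subseteq> sent (E (max t t')) j" and "sent (E t') j \<subseteq> sent (E (max t t')) j"
    unfolding sent_def by blast+
  with assms(3-5) show ?thesis
    by (meson exec_key2_inv[OF assms(1,2)] key2_inv_suggest_supports subsetD)
qed

lemma exec_key3_key2_quorum:
  assumes "is_exec n f F x E L" and "F \<subseteq> {1..n}" and "L t = LAct i (AKey3 val)"
  shows "n - f \<le> card {j. MKey2 val (view (ls (E t) i)) \<in> sent (E t) j}"
proof -
  let ?s = "ls (E t) i"
  have "gstep n f F (E t) (LAct i (AKey3 val)) (E (Suc t))"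
    using assms(1,3) by (metis is_exec_def)
  then obtain s' out where "lact n f i ?s (AKey3 val) s' out"
    by (cases rule: gstep.cases) auto
  then have "n - f \<le> card {j. (j, MKey2 val (view ?s)) \<in> set (rcv ?s)}"
    by (cases rule: lact.cases) auto
  also have "\<dots> \<le> card {j. MKey2 val (view ?s) \<in> sent (E t) j}"
  proof (rule card_mono)
    show "finite {j. MKey2 val (view ?s) \<in> sent (E t) j}"
      using exec_sender_range[OF assms(1,2)] by (auto simp: sent_def intro: finite_subset[of _ "{1..n}"])
    show "{j. (j, MKey2 val (view ?s)) \<in> set (rcv ?s)} \<subseteq> {j. MKey2 val (view ?s) \<in> sent (E t) j}"
      using exec_received_sent[OF assms(1)] unfolding sent_def by blast
  qed
  finally show ?thesis .
qed

theorem lemma2p9: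
  fixes n f :: nat and F :: "nat set" and x :: "nat \<Rightarrow> 'v"
    and E :: "nat \<Rightarrow> 'v gst" and L :: "nat \<Rightarrow> 'v label"
    and i t v :: nat and val :: 'v
  assumes "3 * f < n" and "F \<subseteq> {1..n}" and "card F \<le> f"
    and "is_exec n f F x E L"
    and "i \<in> {1..n} - F"
    and "L t = LAct i (AKey3 val)"
    and "view (ls (E t) i) = v"
  shows "\<exists>S. S \<subseteq> {1..n} - F \<and> card S = f + 1 \<and>
    (\<forall>j \<in> S. \<forall>v' > v. \<forall>t' d k3 v3 k2 v2 pk2.
        (j, d, MSuggest k3 v3 k2 v2 pk2 v') \<in> net (E t') \<longrightarrow> supports (k2, v2, pk2) (int v, val))"
proof -
  define A where "A = {j. MKey2 val v \<in> sent (E t) j}"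
  have quorum: "n - f \<le> card A"
    using exec_key3_key2_quorum[OF assms(4,2,6)] assms(7) by (simp add: A_def)
  have A_parties: "A \<subseteq> {1..n}"
    using exec_sender_range[OF assms(4,2)] by (auto simp: A_def sent_def)
  have "card A - card F \<le> card (A - F)"
    using diff_card_le_card_Diff finite_subset[OF assms(2)] by blast
  with quorum assms(1,3) have "f + 1 \<le> card (A - F)" by linarith
  then obtain S where S: "S \<subseteq> A - F" "card S = f + 1"
    by (meson obtain_subset_with_card_n)
  have "supports (k2, v2, pk2) (int v, val)"
    if "j \<in> S" and "v < v'" and "(j, d, MSuggest k3 v3 k2 v2 pk2 v') \<in> net (E t')"
    for j v' t' d k3 v3 k2 v2 pk2
  proof (rule exec_suggest_supports_earlier_key2[OF assms(4)])
    show "j \<notin> F" and "MKey2 val v \<in> sent (E t) j"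
      using that(1) S(1) by (auto simp: A_def)
    show "MSuggest k3 v3 k2 v2 pk2 v' \<in> sent (E t') j"
      using that(3) by (auto simp: sent_def)
  qed (fact that(2))
  then show ?thesis
    using S A_parties by (intro exI[of _ S]) auto
qed

end
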